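(* $\mathsf{Permutation}\in\mathsf{dAM}[O(\log n)]$, where in $\mathsf{Permutation}$ each node $u$ of the $n$-node communication graph holds a value $a_u\in\{1,\dots,n\}$ and the instance is in the language iff the values $(a_u)_{u\in V}$ are pairwise distinct (i.e. form a permutation of $\{1,\dots,n\}$).
   Context: Distributed interactive proofs (model). An instance consists of a connected communication graph $G=(V,E)$ with $|V|=n$, where each node has a unique identifier of $O(\log n)$ bits, knows $n$, knows its own identifier, its local input (if the problem has local inputs), and the identifiers of its neighbours (with an arbitrary port numbering of its incident edges). A prover, who sees the whole instance, interacts with all nodes in $r$ alternating messages. In a verifier (node) message each node independently samples fresh uniformly random bits and sends them to the prover (public coins). In a prover message the prover sends each node a string. Nodes may additionally exchange the strings they received from the prover with their neighbours in $G$. At the end each node deterministically accepts or rejects as a function of its local information, its own random bits, the strings it received from the prover and those its neighbours received; the instance is accepted iff all nodes accept. The proof size is the maximum number of bits in any single message between the prover and any node. A language $\mathcal L$ (set of instances) is in $\mathsf{dIP}[r,\ell]$ if there is an $r$-message protocol of proof size $\ell=\ell(n)$ such that (completeness) for every instance in $\mathcal L$ some prover makes all nodes accept with probability $>2/3$, and (soundness) for every instance not in $\mathcal L$ and every prover, all nodes accept with probability $<1/3$ (probabilities over the nodes' coins). $\mathsf{dAM}[\ell]$, $\mathsf{dMAM}[\ell]$, $\mathsf{dAMAM}[\ell]$, $\mathsf{dMAMAM}[\ell]$ denote the cases of 2, 3, 4, 5 messages, where the letters indicate who sends each message in order (A = nodes send random coins, M = prover). *)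

theory Defs
  imports Main "HOL-Library.FuncSet" "HOL-Library.Landau_Symbols"
begin

text \<open>
Model of distributed Arthur-Merlin proofs (two messages: nodes send public coins,
then the prover answers).  Identifiers have O(log n) bits: V is contained in
{..< n^c} for a fixed constant c.
\<close>

definition valid_instance ::
  "nat \<Rightarrow> nat \<Rightarrow> nat set \<Rightarrow> (nat \<Rightarrow> nat \<Rightarrow> bool) \<Rightarrow> (nat \<Rightarrow> nat list) \<Rightarrow> bool" where
  "valid_instance c n V E port \<longleftrightarrow>
     finite V \<and> card V = n \<and> V \<noteq> {} \<and> V \<subseteq> {..< n ^ c} \<and>
     (\<forall>u v. E u v \<longrightarrow> u \<in> V \<and> v \<in> V \<and> u \<noteq> v \<and> E v u) \<and>
     (\<forall>u\<in>V. \<forall>v\<in>V. (u, v) \<in> {(x, y). E x y}\<^sup>*) \<and>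
     (\<forall>u\<in>V. distinct (port u) \<and> set (port u) = {v. E u v})"

definition coin_space :: "nat set \<Rightarrow> nat \<Rightarrow> (nat \<Rightarrow> bool list) set" where
  "coin_space V k = (\<Pi>\<^sub>E u\<in>V. {xs. length xs = k})"

definition prover_bounded ::
  "nat set \<Rightarrow> nat \<Rightarrow> nat \<Rightarrow> ((nat \<Rightarrow> bool list) \<Rightarrow> nat \<Rightarrow> bool list) \<Rightarrow> bool" where
  "prover_bounded V k l P \<longleftrightarrow> (\<forall>\<rho>\<in>coin_space V k. \<forall>u\<in>V. length (P \<rho> u) \<le> l)"

text \<open>Decision of node u: function of n, its identifier, its input, its own coins,
  its own prover string, and the list (in port order) of neighbour identifiers
  together with the strings those neighbours received.\<close>
type_synonym 'i decision =
  "nat \<Rightarrow> nat \<Rightarrow> 'i \<Rightarrow> bool list \<Rightarrow> bool list \<Rightarrow> (nat \<times> bool list) list \<Rightarrow> bool"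

definition all_accept ::
  "'i decision \<Rightarrow> nat \<Rightarrow> nat set \<Rightarrow> (nat \<Rightarrow> nat list) \<Rightarrow> (nat \<Rightarrow> 'i)
   \<Rightarrow> (nat \<Rightarrow> bool list) \<Rightarrow> (nat \<Rightarrow> bool list) \<Rightarrow> bool" where
  "all_accept dec n V port a \<rho> \<pi> \<longleftrightarrow>
     (\<forall>u\<in>V. dec n u (a u) (\<rho> u) (\<pi> u) (map (\<lambda>v. (v, \<pi> v)) (port u)))"

definition accept_prob ::
  "'i decision \<Rightarrow> nat \<Rightarrow> nat \<Rightarrow> nat set \<Rightarrow> (nat \<Rightarrow> nat list) \<Rightarrow> (nat \<Rightarrow> 'i)
   \<Rightarrow> ((nat \<Rightarrow> bool list) \<Rightarrow> nat \<Rightarrow> bool list) \<Rightarrow> real" where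
  "accept_prob dec k n V port a P =
     real (card {\<rho> \<in> coin_space V k. all_accept dec n V port a \<rho> (P \<rho>)})
     / real (card (coin_space V k))"

text \<open>Adm describes the admissible instances
  (the allowed local inputs), L the language.\<close>
definition in_dAM ::
  "nat \<Rightarrow> (nat \<Rightarrow> nat)
   \<Rightarrow> (nat \<Rightarrow> nat set \<Rightarrow> (nat \<Rightarrow> nat \<Rightarrow> bool) \<Rightarrow> (nat \<Rightarrow> 'i) \<Rightarrow> bool)
   \<Rightarrow> (nat \<Rightarrow> nat set \<Rightarrow> (nat \<Rightarrow> nat \<Rightarrow> bool) \<Rightarrow> (nat \<Rightarrow> 'i) \<Rightarrow> bool) \<Rightarrow> bool" where
  "in_dAM c l Adm L \<longleftrightarrow>
     (\<exists>(k :: nat \<Rightarrow> nat) (dec :: 'i decision).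
        (\<forall>n. k n \<le> l n) \<and>
        (\<forall>n V E port a. valid_instance c n V E port \<and> Adm n V E a \<longrightarrow>
           (L n V E a \<longrightarrow>
              (\<exists>P. prover_bounded V (k n) (l n) P \<and> accept_prob dec (k n) n V port a P > 2/3)) \<and>
           (\<not> L n V E a \<longrightarrow>
              (\<forall>P. prover_bounded V (k n) (l n) P \<longrightarrow> accept_prob dec (k n) n V port a P < 1/3))))"

definition perm_adm :: "nat \<Rightarrow> nat set \<Rightarrow> (nat \<Rightarrow> nat \<Rightarrow> bool) \<Rightarrow> (nat \<Rightarrow> nat) \<Rightarrow> bool" where
  "perm_adm n V E a \<longleftrightarrow> (\<forall>u\<in>V. a u \<in> {1..n})"

definition Permutation :: "nat \<Rightarrow> nat set \<Rightarrow> (nat \<Rightarrow> nat \<Rightarrow> bool) \<Rightarrow> (nat \<Rightarrow> nat) \<Rightarrow> bool" where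
  "Permutation n V E a \<longleftrightarrow> inj_on a V"

end

theory Submission
  imports
    Defs
    "HOL-Computational_Algebra.Primes"
    "HOL-Computational_Algebra.Polynomial"
    "HOL-Number_Theory.Cong"
    "HOL-Library.Log_Nat"
    "HOL-Real_Asymp.Real_Asymp"
begin

text \<open>The prover certifies a spanning tree of the network rooted at some node R, together with,
  at every node v, the sum modulo a prime p of r ^ a u over the subtree of v, where r is read
  from the coins of R. The local checks force the value at the root to be the sum of r ^ a u over
  all nodes, which the root compares with the sum of r ^ i for i = 1..n. If the inputs are not a
  permutation, the polynomials with these two power sums differ modulo p (one coefficient lies
  strictly between 0 and p), so at most n values of r pass; a union bound over the possible roots
  gives acceptance probability at most n ^ 2 / 2 ^ k < 1/3, where k = O(log n) is the number of
  coins per node. A prime with 2 ^ k < p \<le> 2 ^ (3 k + 1)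
  exists by the classical argument on the prime factorisation of the central binomial coefficient,
  so every field has O(log n) bits.\<close>

section \<open>Bit strings\<close>

definition nat_of_bits :: "bool list \<Rightarrow> nat" where
  "nat_of_bits bs = horner_sum of_bool 2 bs"

definition bits_of_nat :: "nat \<Rightarrow> nat \<Rightarrow> bool list" where
  "bits_of_nat w x = map (bit x) [0..<w]"

lemma length_bits_of_nat [simp]: "length (bits_of_nat w x) = w"
  by (simp add: bits_of_nat_def)

lemma nat_of_bits_of_nat: "nat_of_bits (bits_of_nat w x) = x mod 2 ^ w"
  by (simp add: nat_of_bits_def bits_of_nat_def horner_sum_bit_eq_take_bit take_bit_eq_mod)

lemma nat_of_bits_less: "nat_of_bits bs < 2 ^ length bs"
  unfolding nat_of_bits_def by (rule horner_sum_of_bool_2_less)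

lemma bits_of_nat_of_bits: "bits_of_nat (length bs) (nat_of_bits bs) = bs"
  unfolding bits_of_nat_def nat_of_bits_def
  by (rule nth_equalityI) (simp_all add: bit_horner_sum_bit_iff)

lemma inj_on_nat_of_bits_length: "inj_on nat_of_bits {bs. length bs = k}"
proof (rule inj_onI)
  fix xs ys assume "xs \<in> {bs. length bs = k}" "ys \<in> {bs. length bs = k}" "nat_of_bits xs = nat_of_bits ys"
  then show "xs = ys"
    using bits_of_nat_of_bits[of xs] bits_of_nat_of_bits[of ys] by simp
qed

definition encode_fields :: "nat \<Rightarrow> nat list \<Rightarrow> bool list" where
  "encode_fields w xs = concat (map (bits_of_nat w) xs)"

definition field :: "nat \<Rightarrow> bool list \<Rightarrow> nat \<Rightarrow> nat" where
  "field w s i = nat_of_bits (take w (drop (i * w) s))"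

lemma length_encode_fields [simp]: "length (encode_fields w xs) = length xs * w"
  unfolding encode_fields_def by (induction xs) simp_all

lemma field_encode_fields:
  assumes "i < length xs" and "\<forall>x\<in>set xs. x < 2 ^ w"
  shows "field w (encode_fields w xs) i = xs ! i"
  using assms
proof (induction xs arbitrary: i)
  case (Cons x xs)
  have head: "encode_fields w (x # xs) = bits_of_nat w x @ encode_fields w xs"
    by (simp add: encode_fields_def)
  show ?case
  proof (cases i)
    case 0
    then show ?thesis
      using Cons.prems by (simp add: field_def head nat_of_bits_of_nat)
  next
    case (Suc j)
    have "field w (encode_fields w (x # xs)) i = field w (encode_fields w xs) j"
      by (simp add: field_def head Suc)
    also have "\<dots> = xs ! j"
      using Cons.prems Suc by (intro Cons.IH) auto
    finally show ?thesis
      by (simp add: Suc)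
  qed
qed simp

section \<open>A prime in a polynomial range\<close>

lemma multiplicity_fact:
  fixes p :: nat
  assumes "prime p" and "n \<le> N"
  shows "multiplicity p (fact n) = (\<Sum>i\<in>{1..N}. n div p ^ i)"
  using assms(2)
proof (induction n)
  case (Suc n)
  have p: "p > 1"
    using assms(1) prime_gt_1_nat by blast
  have "p ^ multiplicity p (Suc n) \<le> Suc n"
    by (intro dvd_imp_le multiplicity_dvd) simp
  moreover have "multiplicity p (Suc n) < p ^ multiplicity p (Suc n)"
    using p by (intro less_exp[THEN order.strict_trans2] power_mono) auto
  ultimately have le_N: "multiplicity p (Suc n) \<le> N"
    using Suc.prems by linarith
  have dvd_iff: "p ^ i dvd Suc n \<longleftrightarrow> i \<le> multiplicity p (Suc n)" for i
    using p by (intro power_dvd_iff_le_multiplicity) auto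
  have "(\<Sum>i\<in>{1..N}. Suc n div p ^ i) = (\<Sum>i\<in>{1..N}. n div p ^ i + (if p ^ i dvd Suc n then 1 else 0))"
    by (intro sum.cong refl) (simp add: div_Suc dvd_eq_mod_eq_0)
  also have "\<dots> = (\<Sum>i\<in>{1..N}. n div p ^ i) + card {i\<in>{1..N}. p ^ i dvd Suc n}"
    by (simp add: sum.distrib sum.If_cases Int_def)
  also have "{i\<in>{1..N}. p ^ i dvd Suc n} = {1..multiplicity p (Suc n)}"
    using le_N by (auto simp: dvd_iff)
  finally have "(\<Sum>i\<in>{1..N}. Suc n div p ^ i) = (\<Sum>i\<in>{1..N}. n div p ^ i) + multiplicity p (Suc n)"
    by simp
  moreover have "multiplicity p (Suc n * fact n :: nat) = multiplicity p (Suc n) + multiplicity p (fact n :: nat)"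
    by (rule prime_elem_multiplicity_mult_distrib) (use assms(1) in auto)
  ultimately show ?case
    using Suc by simp
qed simp

lemma double_div_eq: "(2 * m) div d = 2 * (m div d) + (2 * (m mod d)) div d"
  for m d :: nat
proof (cases "d = 0")
  case False
  have "2 * m = 2 * (m mod d) + 2 * (m div d) * d"
    using div_mult_mod_eq[of m d] by linarith
  then show ?thesis
    using False by simp
qed simp

lemma prime_power_multiplicity_central_binomial_le:
  fixes p m :: nat
  assumes p: "prime p" and "m > 0"
  shows "p ^ multiplicity p ((2 * m) choose m) \<le> 2 * m"
proof -
  have p1: "p > 1"
    using p prime_gt_1_nat by blast
  define C where "C = (2 * m) choose m"
  define t where "t i = (2 * (m mod p ^ i)) div p ^ i" for i
  have "fact (2 * m) = fact m * fact m * (C :: nat)"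
    using binomial_fact_lemma[of m "2 * m"] unfolding C_def by (simp add: mult_2)
  then have "multiplicity p (fact (2 * m) :: nat) = 2 * multiplicity p (fact m :: nat) + multiplicity p C"
    using p by (simp add: prime_elem_multiplicity_mult_distrib C_def)
  moreover have "multiplicity p (fact (2 * m) :: nat) = (\<Sum>i\<in>{1..2*m}. (2 * m) div p ^ i)"
    by (rule multiplicity_fact[OF p]) simp
  moreover have "multiplicity p (fact m :: nat) = (\<Sum>i\<in>{1..2*m}. m div p ^ i)"
    by (rule multiplicity_fact[OF p]) simp
  moreover have "(\<Sum>i\<in>{1..2*m}. (2 * m) div p ^ i) = 2 * (\<Sum>i\<in>{1..2*m}. m div p ^ i) + (\<Sum>i\<in>{1..2*m}. t i)"
    unfolding t_def double_div_eq[of m] by (simp add: sum.distrib sum_distrib_left)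
  ultimately have mult_C: "multiplicity p C = (\<Sum>i\<in>{1..2*m}. t i)"
    by simp
  define e where "e = floorlog p (2 * m)"
  have t_le: "t i \<le> (if i < e then 1 else 0)" for i
  proof (cases "i < e")
    case True
    have "2 * (m mod p ^ i) < 2 * p ^ i"
      using p1 by simp
    then have "t i < 2"
      using p1 by (simp add: t_def div_less_iff_less_mult mult.commute)
    then show ?thesis
      using True by simp
  next
    case False
    then have "2 * m < p ^ i"
      using p1 floorlog_leD[of p "2 * m" i] unfolding e_def by simp
    then show ?thesis
      using False by (simp add: t_def mod_less_eq_dividend[THEN order.trans] order.strict_trans1)
  qed
  have "multiplicity p C \<le> (\<Sum>i\<in>{1..2*m}. if i < e then 1 else 0)"
    unfolding mult_C by (intro sum_mono t_le)
  also have "\<dots> = card {i\<in>{1..2*m}. i < e}"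
    by (simp add: sum.If_cases Int_def)
  also have "\<dots> \<le> card {1..<e}"
    by (intro card_mono) auto
  finally have "multiplicity p C \<le> e - 1"
    by simp
  then have "p ^ multiplicity p C \<le> p ^ (e - 1)"
    using p1 by (intro power_increasing) auto
  also have "\<dots> \<le> 2 * m"
    using floorlog_bounds[of "2 * m" p] p1 assms(2) unfolding e_def by simp
  finally show ?thesis
    unfolding C_def .
qed

lemma central_binomial_ge_power: "2 ^ m \<le> (2 * m) choose m"
proof -
  have "(2::nat) ^ m = (\<Sum>k\<le>m. m choose k)"
    by (simp add: choose_row_sum)
  also have "\<dots> \<le> (\<Sum>k\<le>m. (m choose k) ^ 2)"
    by (intro sum_mono) (simp add: power2_eq_square le_square)
  also have "\<dots> = (2 * m) choose m"
    by (rule choose_square_sum)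
  finally show ?thesis .
qed

lemma cube_power_less_power_cube:
  fixes M :: nat
  assumes "M \<ge> 4"
  shows "(2 * M ^ 3) ^ M < 2 ^ (M ^ 3)"
proof -
  have "M ^ 3 < (2 ^ M) ^ 3"
    by (intro power_strict_mono less_exp) auto
  then have "2 * M ^ 3 < 2 ^ (3 * M + 1)"
    by (simp add: power_mult[symmetric] mult.commute)
  then have "(2 * M ^ 3) ^ M < (2 ^ (3 * M + 1)) ^ M"
    using assms by (intro power_strict_mono) auto
  also have "\<dots> = 2 ^ ((3 * M + 1) * M)"
    by (simp only: power_mult)
  also have "\<dots> \<le> 2 ^ (M ^ 3)"
  proof (intro power_increasing)
    have "3 * M + 1 \<le> M * M"
      using assms mult_le_mono1[of 4 M M] by linarith
    then have "(3 * M + 1) * M \<le> M * M * M"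
      by (rule mult_le_mono1)
    then show "(3 * M + 1) * M \<le> M ^ 3"
      by (simp only: power3_eq_cube)
  qed simp
  finally show ?thesis .
qed

lemma exists_prime_cube_range:
  fixes M :: nat
  assumes M: "M \<ge> 4"
  shows "\<exists>p. prime p \<and> M < p \<and> p \<le> 2 * M ^ 3"
proof (rule ccontr)
  assume no_prime: "\<not> ?thesis"
  define m where "m = M ^ 3"
  have m: "m > 0"
    using M by (simp add: m_def)
  define C where "C = (2 * m) choose m"
  have factors_le: "p \<le> M" if "p \<in> prime_factors C" for p
  proof -
    have "p dvd fact (2 * m)"
      using that binomial_fact_lemma[of m "2 * m"] unfolding C_def
      by (metis dvd_trans dvd_triv_right in_prime_factors_imp_dvd le_add2 mult_2)
    then have "p \<le> 2 * m"
      using prime_dvd_fact_iff[OF in_prime_factors_imp_prime[OF that]] by simp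
    then show ?thesis
      using no_prime that unfolding m_def by (meson in_prime_factors_imp_prime not_le)
  qed
  have card_factors: "card (prime_factors C) \<le> M"
  proof -
    have "prime_factors C \<subseteq> {1..M}"
    proof
      fix p assume "p \<in> prime_factors C"
      then show "p \<in> {1..M}"
        using factors_le[of p] prime_ge_1_nat[OF in_prime_factors_imp_prime] by auto
    qed
    then show ?thesis
      using card_mono[of "{1..M}"] by fastforce
  qed
  have "C = (\<Prod>p\<in>prime_factors C. p ^ multiplicity p C)"
    using prod_prime_factors[of C] by (simp add: C_def)
  also have "\<dots> \<le> (2 * m) ^ M"
  proof (rule prod_le_power[OF _ card_factors])
    show "0 \<le> p ^ multiplicity p C \<and> p ^ multiplicity p C \<le> 2 * m" if "p \<in> prime_factors C" for p
      using prime_power_multiplicity_central_binomial_le[OF in_prime_factors_imp_prime[OF that] m]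
      by (simp add: C_def)
  qed (use m in simp)
  also have "\<dots> < 2 ^ m"
    unfolding m_def by (rule cube_power_less_power_cube[OF M])
  also have "\<dots> \<le> C"
    unfolding C_def by (rule central_binomial_ge_power)
  finally show False
    by simp
qed

section \<open>Roots of polynomials modulo a prime\<close>

lemma card_roots_mod_prime_le_degree:
  fixes Q :: "int poly" and p :: nat
  assumes p: "prime p" and nonzero: "\<exists>j. \<not> int p dvd coeff Q j"
  shows "card {x\<in>{0..<p}. int p dvd poly Q (int x)} \<le> degree Q"
  using nonzero
proof (induction "degree Q" arbitrary: Q rule: less_induct)
  case less
  show ?case
  proof (cases "{x\<in>{0..<p}. int p dvd poly Q (int x)} = {}")
    case False
    then obtain x0 where x0: "x0 < p" "int p dvd poly Q (int x0)"
      by auto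
    define g where "g = synthetic_div Q (int x0)"
    have Q_eq: "Q = [:- int x0, 1:] * g + [:poly Q (int x0):]"
      unfolding g_def by (rule synthetic_div_correct'[symmetric])
    have g_nonzero: "\<exists>j. \<not> int p dvd coeff g j"
    proof (rule ccontr)
      assume "\<not> ?thesis"
      then have g_dvd: "int p dvd coeff g i" for i
        by blast
      have "int p dvd coeff ([:- int x0, 1:] * g) j" for j
        unfolding coeff_mult by (intro dvd_sum dvd_mult g_dvd)
      then have "int p dvd coeff Q j" for j
        using x0(2) by (subst Q_eq) (auto simp: coeff_pCons split: nat.split)
      then show False
        using less.prems by blast
    qed
    have "degree Q \<noteq> 0"
    proof
      assume "degree Q = 0"
      then have "poly Q (int x0) = coeff Q 0"
        by (metis degree_0_id poly_pCons poly_0 mult_zero_right add.right_neutral)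
      then have "int p dvd coeff Q j" for j
        using x0(2) \<open>degree Q = 0\<close> by (cases j) (auto simp: coeff_eq_0)
      then show False
        using less.prems by blast
    qed
    then have deg_g: "degree g < degree Q"
      by (simp add: g_def degree_synthetic_div)
    have roots_Q: "{x\<in>{0..<p}. int p dvd poly Q (int x)} \<subseteq> insert x0 {x\<in>{0..<p}. int p dvd poly g (int x)}"
    proof
      fix x assume x: "x \<in> {x\<in>{0..<p}. int p dvd poly Q (int x)}"
      show "x \<in> insert x0 {x\<in>{0..<p}. int p dvd poly g (int x)}"
      proof (cases "x = x0")
        case False
        have "poly Q (int x) = (int x - int x0) * poly g (int x) + poly Q (int x0)"
          by (subst Q_eq) (simp add: algebra_simps)
        then have "int p dvd (int x - int x0) * poly g (int x)"
          using x x0(2) by (metis (no_types, lifting) dvd_add_left_iff mem_Collect_eq)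
        moreover have "\<not> int p dvd (int x - int x0)"
        proof
          assume "int p dvd (int x - int x0)"
          then have "\<bar>int p\<bar> \<le> \<bar>int x - int x0\<bar>"
            using False by (intro dvd_imp_le_int) auto
          then show False
            using x x0(1) by auto
        qed
        ultimately show ?thesis
          using p x prime_dvd_mult_iff[of "int p"] by auto
      qed simp
    qed
    have "card {x\<in>{0..<p}. int p dvd poly Q (int x)} \<le> card (insert x0 {x\<in>{0..<p}. int p dvd poly g (int x)})"
      by (intro card_mono roots_Q) simp
    also have "\<dots> \<le> Suc (degree g)"
      using less.hyps[OF deg_g g_nonzero] by (simp add: card_insert_if)
    finally show ?thesis
      using deg_g by linarith
  qed (simp only: card.empty)
qed

lemma card_power_sum_coincidences_le:
  fixes a :: "'v \<Rightarrow> nat" and p n :: nat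
  assumes p: "prime p" and "n < p" and "finite V" and "card V = n"
    and range_a: "a ` V \<subseteq> {1..n}" and "\<not> inj_on a V"
  shows "card {x\<in>{0..<p}. [(\<Sum>u\<in>V. x ^ a u) = (\<Sum>i=1..n. x ^ i)] (mod p)} \<le> n"
proof -
  define Q :: "int poly" where "Q = (\<Sum>u\<in>V. monom 1 (a u)) - (\<Sum>i=1..n. monom 1 i)"
  have coeff_Q: "coeff Q j = int (card {u\<in>V. a u = j}) - (if j \<in> {1..n} then 1 else 0)" for j
    using \<open>finite V\<close> by (simp add: Q_def coeff_sum sum.If_cases Int_def)
  have "degree Q \<le> n"
  proof (rule degree_le, intro allI impI)
    fix j assume "n < j"
    then have "{u\<in>V. a u = j} = {}"
      using range_a by fastforce
    then show "coeff Q j = 0"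
      using \<open>n < j\<close> unfolding coeff_Q by (simp only: card.empty) simp
  qed
  obtain u v where uv: "u \<in> V" "v \<in> V" "u \<noteq> v" "a u = a v"
    using \<open>\<not> inj_on a V\<close> unfolding inj_on_def by blast
  define C where "C = {w\<in>V. a w = a u}"
  have "2 \<le> card C"
    using uv \<open>finite V\<close> card_mono[of C "{u, v}"] by (auto simp: C_def)
  moreover have "card C \<le> n"
    using \<open>finite V\<close> \<open>card V = n\<close> card_mono[of V C] by (auto simp: C_def)
  ultimately have "0 < coeff Q (a u)" and "coeff Q (a u) < int p"
    using range_a uv(1) \<open>n < p\<close> by (auto simp: coeff_Q C_def)
  then have "\<not> int p dvd coeff Q (a u)"
    by (auto dest: zdvd_imp_le)
  then have "card {x\<in>{0..<p}. int p dvd poly Q (int x)} \<le> degree Q"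
    by (intro card_roots_mod_prime_le_degree[OF p]) blast
  moreover have "[(\<Sum>u\<in>V. x ^ a u) = (\<Sum>i=1..n. x ^ i)] (mod p) \<longleftrightarrow> int p dvd poly Q (int x)" for x
    by (simp add: Q_def poly_sum poly_monom cong_int_iff[symmetric] cong_iff_dvd_diff)
  ultimately show ?thesis
    using \<open>degree Q \<le> n\<close> by simp
qed

section \<open>Spanning trees and subtree sums\<close>

lemma exists_rooted_spanning_tree:
  assumes "finite V" and "R \<in> V"
    and conn: "\<forall>u\<in>V. (u, R) \<in> {(x, y). E x y}\<^sup>*" and closed: "\<And>u v. E u v \<Longrightarrow> v \<in> V"
  shows "\<exists>parent rank. \<forall>u\<in>V. parent u \<in> V \<and> rank u < card V \<and>
           (u \<noteq> R \<longrightarrow> E u (parent u) \<and> rank (parent u) < rank u)"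
proof -
  define edges where "edges = {(x, y). E x y}"
  define dist where "dist u = (LEAST j. (u, R) \<in> edges ^^ j)" for u
  have path: "(u, R) \<in> edges ^^ dist u" if u: "u \<in> V" for u
  proof -
    obtain j where "(u, R) \<in> edges ^^ j"
      using conn u rtrancl_imp_relpow unfolding edges_def by blast
    then show ?thesis
      unfolding dist_def by (rule LeastI)
  qed
  have "\<exists>v. E u v \<and> dist v < dist u" if u: "u \<in> V" "u \<noteq> R" for u
  proof -
    obtain i where i: "dist u = Suc i"
      using path[OF u(1)] u(2) by (cases "dist u") simp_all
    with path[OF u(1)] have "(u, R) \<in> edges ^^ Suc i"
      by simp
    then obtain v where "(u, v) \<in> edges" and "(v, R) \<in> edges ^^ i"
      by (blast dest: relpow_Suc_D2)
    moreover have "dist v \<le> i"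
      unfolding dist_def using calculation(2) by (rule Least_le)
    ultimately show ?thesis
      using i unfolding edges_def by auto
  qed
  then obtain step where step: "\<And>u. u \<in> V \<Longrightarrow> u \<noteq> R \<Longrightarrow> E u (step u) \<and> dist (step u) < dist u"
    by metis
  define parent where "parent = step(R := R)"
  define rank where "rank u = card {v\<in>V. dist v < dist u}" for u
  have "parent u \<in> V \<and> rank u < card V \<and> (u \<noteq> R \<longrightarrow> E u (parent u) \<and> rank (parent u) < rank u)"
    if "u \<in> V" for u
  proof -
    have "parent u \<in> V"
      using step[OF that] closed \<open>R \<in> V\<close> by (cases "u = R") (auto simp: parent_def)
    moreover have "rank u < card V"
      unfolding rank_def using \<open>finite V\<close> that by (intro psubset_card_mono) auto
    moreover have "E u (parent u) \<and> rank (parent u) < rank u" if "u \<noteq> R"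
      unfolding rank_def parent_def using \<open>finite V\<close> step[OF \<open>u \<in> V\<close> that] closed that
      by (auto intro!: psubset_card_mono)
    ultimately show ?thesis
      by blast
  qed
  then show ?thesis
    by blast
qed

lemma constant_on_connected:
  assumes conn: "\<forall>u\<in>V. \<forall>v\<in>V. (u, v) \<in> {(x, y). E x y}\<^sup>*"
    and edge_eq: "\<And>x y. E x y \<Longrightarrow> f y = f x" and "u \<in> V" and "v \<in> V"
  shows "f v = f u"
proof -
  have "(u, v) \<in> {(x, y). E x y}\<^sup>*"
    using conn \<open>u \<in> V\<close> \<open>v \<in> V\<close> by blast
  then show ?thesis
    by (induction rule: rtrancl_induct) (auto dest: edge_eq)
qed

lemma mem_if_others_not_minimal:
  fixes rank :: "'a \<Rightarrow> nat"
  assumes "V \<noteq> {}" and smaller: "\<And>u. u \<in> V \<Longrightarrow> u \<noteq> R \<Longrightarrow> \<exists>v\<in>V. rank v < rank u"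
  shows "R \<in> V"
proof -
  obtain m where "m \<in> V" and m_min: "\<And>v. v \<in> V \<Longrightarrow> rank m \<le> rank v"
    using ex_has_least_nat[of "\<lambda>v. v \<in> V" _ rank] \<open>V \<noteq> {}\<close> by blast
  then have "m = R"
    using smaller[of m] m_min by fastforce
  with \<open>m \<in> V\<close> show ?thesis
    by simp
qed

lemma exists_tree_recursion:
  fixes rank :: "'v \<Rightarrow> nat" and F :: "'v \<Rightarrow> 'b::comm_monoid_add \<Rightarrow> 'b"
  assumes "finite V" and parent_rank: "\<And>v. v \<in> V \<Longrightarrow> v \<noteq> R \<Longrightarrow> rank (parent v) < rank v"
  shows "\<exists>S. \<forall>u\<in>V. S u = F u (\<Sum>v\<in>{v\<in>V - {R}. parent v = u}. S v)"
proof -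
  define children where "children u = {v\<in>V - {R}. parent v = u}" for u
  define N where "N = Suc (Max (rank ` V))"
  have rank_less: "rank u < N" if "u \<in> V" for u
    using \<open>finite V\<close> that by (simp add: N_def le_imp_less_Suc)
  \<comment> \<open>Children have larger rank, so S is built by downward induction on the rank.\<close>
  have "\<exists>S. \<forall>u\<in>V. N - m \<le> rank u \<longrightarrow> S u = F u (\<Sum>v\<in>children u. S v)" for m
  proof (induction m)
    case 0
    then show ?case
      using rank_less by (metis diff_zero not_le)
  next
    case (Suc m)
    then obtain S where S: "\<forall>u\<in>V. N - m \<le> rank u \<longrightarrow> S u = F u (\<Sum>v\<in>children u. S v)"
      by blast
    define S' where "S' u = (if rank u = N - Suc m then F u (\<Sum>v\<in>children u. S v) else S u)" for u
    have "S' u = F u (\<Sum>v\<in>children u. S' v)" if "u \<in> V" "N - Suc m \<le> rank u" for u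
    proof -
      have "S' v = S v" if "v \<in> children u" for v
        using that parent_rank \<open>N - Suc m \<le> rank u\<close> by (fastforce simp: S'_def children_def)
      then have "(\<Sum>v\<in>children u. S' v) = (\<Sum>v\<in>children u. S v)"
        by (rule sum.cong[OF refl])
      then show ?thesis
        using S that by (auto simp: S'_def)
    qed
    then show ?case
      by blast
  qed
  from this[of N] show ?thesis
    unfolding children_def by auto
qed

lemma tree_sum_cong:
  fixes S f :: "'v \<Rightarrow> nat"
  assumes "finite V" and "R \<in> V" and parent: "\<And>v. v \<in> V \<Longrightarrow> v \<noteq> R \<Longrightarrow> parent v \<in> V"
    and local_sum: "\<And>u. u \<in> V \<Longrightarrow> [S u = f u + (\<Sum>v\<in>{v\<in>V - {R}. parent v = u}. S v)] (mod p)"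
  shows "[S R = (\<Sum>u\<in>V. f u)] (mod p)"
proof -
  have children: "(\<Sum>u\<in>V. \<Sum>v\<in>{v\<in>V - {R}. parent v = u}. S v) = (\<Sum>v\<in>V - {R}. S v)"
    by (rule sum.group) (use \<open>finite V\<close> parent in auto)
  have "S R + (\<Sum>v\<in>V - {R}. S v) = (\<Sum>u\<in>V. S u)"
    using \<open>finite V\<close> \<open>R \<in> V\<close> by (rule sum.remove[symmetric])
  also have "[\<dots> = (\<Sum>u\<in>V. f u + (\<Sum>v\<in>{v\<in>V - {R}. parent v = u}. S v))] (mod p)"
    by (intro cong_sum local_sum)
  also have "(\<Sum>u\<in>V. f u + (\<Sum>v\<in>{v\<in>V - {R}. parent v = u}. S v)) = (\<Sum>u\<in>V. f u) + (\<Sum>v\<in>V - {R}. S v)"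
    by (simp only: sum.distrib children)
  finally show ?thesis
    by (simp add: cong_add_rcancel_nat)
qed

section \<open>Counting coin assignments\<close>

lemma card_coin_space: "finite V \<Longrightarrow> card (coin_space V k) = (2 ^ k) ^ card V"
  by (simp add: coin_space_def card_PiE card_lists_length_eq[of "UNIV :: bool set", simplified])

lemma finite_coin_space: "finite V \<Longrightarrow> finite (coin_space V k)"
  by (simp add: coin_space_def finite_PiE finite_lists_length_eq[of "UNIV :: bool set", simplified])

lemma card_coin_space_value_in:
  assumes "finite V" and "R \<in> V" and "finite B"
  shows "card {\<rho>\<in>coin_space V k. nat_of_bits (\<rho> R) \<in> B} \<le> card B * (2 ^ k) ^ (card V - 1)"
proof -
  define coins where "coins = (\<lambda>v. {xs :: bool list. length xs = k})(R := {xs. length xs = k \<and> nat_of_bits xs \<in> B})"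
  have "{\<rho>\<in>coin_space V k. nat_of_bits (\<rho> R) \<in> B} = PiE V coins"
  proof (intro set_eqI iffI)
    fix \<rho> assume "\<rho> \<in> {\<rho>\<in>coin_space V k. nat_of_bits (\<rho> R) \<in> B}"
    then show "\<rho> \<in> PiE V coins"
      by (auto simp: coin_space_def coins_def PiE_iff)
  next
    fix \<rho> assume \<rho>: "\<rho> \<in> PiE V coins"
    then have "length (\<rho> v) = k" if "v \<in> V" for v
      using that by (cases "v = R") (auto simp: coins_def PiE_iff)
    moreover have "nat_of_bits (\<rho> R) \<in> B"
      using \<rho> \<open>R \<in> V\<close> by (auto simp: coins_def PiE_iff)
    ultimately show "\<rho> \<in> {\<rho>\<in>coin_space V k. nat_of_bits (\<rho> R) \<in> B}"
      using \<rho> by (auto simp: coin_space_def PiE_iff)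
  qed
  also have "card \<dots> = card (coins R) * (\<Prod>v\<in>V - {R}. card (coins v))"
    using \<open>finite V\<close> \<open>R \<in> V\<close> by (simp add: card_PiE prod.remove)
  also have "(\<Prod>v\<in>V - {R}. card (coins v)) = (2 ^ k) ^ (card V - 1)"
    using \<open>finite V\<close> \<open>R \<in> V\<close>
    by (simp add: coins_def card_lists_length_eq[of "UNIV :: bool set", simplified])
  also have "card (coins R) \<le> card B"
    unfolding coins_def using inj_on_nat_of_bits_length[of k] \<open>finite B\<close>
    by (intro card_inj_on_le[of nat_of_bits]) (auto intro: inj_on_subset)
  finally show ?thesis
    by simp
qed

lemma card_coin_space_some_value_in:
  assumes "finite V" and "finite B"
  shows "card {\<rho>\<in>coin_space V k. \<exists>R\<in>V. nat_of_bits (\<rho> R) \<in> B}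
           \<le> card V * (card B * (2 ^ k) ^ (card V - 1))"
proof -
  have "{\<rho>\<in>coin_space V k. \<exists>R\<in>V. nat_of_bits (\<rho> R) \<in> B}
      = (\<Union>R\<in>V. {\<rho>\<in>coin_space V k. nat_of_bits (\<rho> R) \<in> B})"
    by blast
  also have "card \<dots> \<le> (\<Sum>R\<in>V. card {\<rho>\<in>coin_space V k. nat_of_bits (\<rho> R) \<in> B})"
    by (rule card_UN_le[OF \<open>finite V\<close>])
  also have "\<dots> \<le> (\<Sum>R\<in>V. card B * (2 ^ k) ^ (card V - 1))"
    using card_coin_space_value_in[OF \<open>finite V\<close> _ \<open>finite B\<close>] by (intro sum_mono)
  finally show ?thesis
    by simp
qed

section \<open>The protocol\<close>

text \<open>With k = coin_length n we have 3 n ^ 2 < 2 ^ k, and a field of width field_width c n holds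
  identifiers (below n ^ c), ranks (below n), coin values (below 2 ^ k) and residues modulo the
  prime p \<le> 2 ^ (3 k + 1).\<close>
definition coin_length :: "nat \<Rightarrow> nat" where
  "coin_length n = 2 * floorlog 2 n + 2"

definition field_width :: "nat \<Rightarrow> nat \<Rightarrow> nat" where
  "field_width c n = 3 * coin_length n + 1 + c * floorlog 2 n"

definition proof_length :: "nat \<Rightarrow> nat \<Rightarrow> nat" where
  "proof_length c n = 5 * field_width c n"

definition modulus :: "nat \<Rightarrow> nat" where
  "modulus n = (SOME p. prime p \<and> 2 ^ coin_length n < p \<and> p \<le> 2 * (2 ^ coin_length n) ^ 3)"

lemma less_power_floorlog: "n < 2 ^ floorlog 2 n"
  by (rule floorlog_leD) simp_all

lemma modulus_bounds: "prime (modulus n) \<and> 2 ^ coin_length n < modulus n \<and> modulus n \<le> 2 * (2 ^ coin_length n) ^ 3"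
proof -
  have "(4::nat) \<le> 2 ^ coin_length n"
    using power_increasing[of 2 "coin_length n" "2::nat"] by (simp add: coin_length_def)
  then show ?thesis
    unfolding modulus_def by (rule someI_ex[OF exists_prime_cube_range])
qed

lemma three_square_less_two_power_coin_length: "3 * n ^ 2 < 2 ^ coin_length n"
proof -
  have "n ^ 2 < (2 ^ floorlog 2 n) ^ 2"
    by (intro power_strict_mono less_power_floorlog) simp_all
  then show ?thesis
    by (simp add: coin_length_def power_add power_mult[symmetric] mult.commute)
qed

lemma field_width_bounds:
  shows "n ^ c \<le> 2 ^ field_width c n" and "n < 2 ^ field_width c n"
    and "(2::nat) ^ coin_length n \<le> 2 ^ field_width c n" and "modulus n \<le> 2 ^ field_width c n"
proof -
  have "n ^ c \<le> (2 ^ floorlog 2 n) ^ c"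
    by (intro power_mono less_imp_le[OF less_power_floorlog]) simp
  also have "\<dots> = 2 ^ (c * floorlog 2 n)"
    by (simp add: power_mult[symmetric] mult.commute)
  also have "\<dots> \<le> 2 ^ field_width c n"
    by (intro power_increasing) (simp_all add: field_width_def)
  finally show "n ^ c \<le> 2 ^ field_width c n" .
  have "(2::nat) ^ floorlog 2 n \<le> 2 ^ field_width c n"
    by (intro power_increasing) (simp_all add: field_width_def coin_length_def)
  then show "n < 2 ^ field_width c n"
    using less_power_floorlog[of n] by linarith
  show "(2::nat) ^ coin_length n \<le> 2 ^ field_width c n"
    by (intro power_increasing) (simp_all add: field_width_def)
  have "modulus n \<le> 2 ^ (3 * coin_length n + 1)"
    using modulus_bounds[of n] by (simp add: power_mult[symmetric] mult.commute)
  also have "\<dots> \<le> 2 ^ field_width c n"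
    by (intro power_increasing) (simp_all add: field_width_def)
  finally show "modulus n \<le> 2 ^ field_width c n" .
qed

lemma proof_length_bigo: "(\<lambda>n. real (proof_length c n)) \<in> O(\<lambda>n. ln (real n))"
proof -
  have "real (proof_length c n) \<le> (30 + 5 * real c) * (ln (real n) / ln 2 + 1) + 35" if "n \<ge> 1" for n
  proof -
    have "real (proof_length c n) = (30 + 5 * real c) * real (floorlog 2 n) + 35"
      by (simp add: proof_length_def field_width_def coin_length_def algebra_simps)
    also have "real (floorlog 2 n) \<le> ln (real n) / ln 2 + 1"
      using that by (simp add: floorlog_def log_def)
    finally show ?thesis
      by (simp add: mult_left_mono)
  qed
  then have "(\<lambda>n. real (proof_length c n)) \<in> O(\<lambda>n. (30 + 5 * real c) * (ln (real n) / ln 2 + 1) + 35)"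
    by (intro bigoI[of _ 1] eventually_at_top_linorderI[of 1]) auto
  also have "(\<lambda>n. (30 + 5 * real c) * (ln (real n) / ln 2 + 1) + 35) \<in> O(\<lambda>n. ln (real n))"
    by real_asymp
  finally show ?thesis .
qed

text \<open>A certificate consists of five fields: the root identifier, a rank that decreases towards
  the root, the parent, the point r drawn from the root's coins, and the sum of r ^ a v over
  the subtree below the node v, modulo the prime.\<close>
definition perm_dec :: "nat \<Rightarrow> nat decision" where
  "perm_dec c n u x \<rho> s nb = (let F = field (field_width c n); p = modulus n in
     (\<forall>(v, t)\<in>set nb. F t 0 = F s 0 \<and> F t 3 = F s 3) \<and>
     (if u = F s 0 then F s 3 = nat_of_bits \<rho> \<and> [F s 4 = (\<Sum>i=1..n. F s 3 ^ i)] (mod p)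
      else (\<exists>(v, t)\<in>set nb. v = F s 2 \<and> F t 1 < F s 1)) \<and>
     [F s 4 = F s 3 ^ x + (\<Sum>(v, t)\<leftarrow>nb. if F t 2 = u \<and> v \<noteq> F t 0 then F t 4 else 0)] (mod p))"

lemma sum_list_port_children:
  assumes vi: "valid_instance c n V E port" and "u \<in> V"
    and parent_edge: "\<And>v. v \<in> V - {R} \<Longrightarrow> parent v = u \<Longrightarrow> E v u"
  shows "(\<Sum>v\<leftarrow>port u. if parent v = u \<and> v \<noteq> R then g v else 0) = (\<Sum>v\<in>{v\<in>V - {R}. parent v = u}. g v)"
proof -
  have port: "distinct (port u)" "set (port u) = {v. E u v}"
    and edge: "\<And>x y. E x y \<Longrightarrow> y \<in> V \<and> E y x"
    using vi \<open>u \<in> V\<close> unfolding valid_instance_def by auto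
  have "finite {v. E u v}"
    by (simp flip: port(2))
  have "(\<Sum>v\<leftarrow>port u. if parent v = u \<and> v \<noteq> R then g v else 0)
      = (\<Sum>v\<in>{v. E u v}. if parent v = u \<and> v \<noteq> R then g v else 0)"
    using port by (simp add: sum_list_distinct_conv_sum_set)
  also have "\<dots> = (\<Sum>v\<in>{v\<in>{v. E u v}. parent v = u \<and> v \<noteq> R}. g v)"
    by (rule sum.inter_filter[symmetric]) fact
  also have "{v\<in>{v. E u v}. parent v = u \<and> v \<noteq> R} = {v\<in>V - {R}. parent v = u}"
    using edge parent_edge by blast
  finally show ?thesis .
qed

lemma all_accept_imp_power_sum_cong:
  assumes vi: "valid_instance c n V E port" and acc: "all_accept (perm_dec c) n V port a \<rho> \<pi>"
  shows "\<exists>R\<in>V. [(\<Sum>u\<in>V. nat_of_bits (\<rho> R) ^ a u) = (\<Sum>i=1..n. nat_of_bits (\<rho> R) ^ i)] (mod modulus n)"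
proof -
  define p where "p = modulus n"
  define F where "F u i = field (field_width c n) (\<pi> u) i" for u i
  have "finite V" and "V \<noteq> {}" and conn: "\<forall>u\<in>V. \<forall>v\<in>V. (u, v) \<in> {(x, y). E x y}\<^sup>*"
    and edge: "\<And>x y. E x y \<Longrightarrow> x \<in> V \<and> y \<in> V \<and> E y x"
    and port: "\<And>u. u \<in> V \<Longrightarrow> set (port u) = {v. E u v}"
    using vi unfolding valid_instance_def by auto
  have dec: "perm_dec c n u (a u) (\<rho> u) (\<pi> u) (map (\<lambda>v. (v, \<pi> v)) (port u))" if "u \<in> V" for u
    using acc that unfolding all_accept_def by blast
  have agree: "F v 0 = F u 0 \<and> F v 3 = F u 3" if "E u v" for u v
    using dec[of u] edge[OF that] port[of u] that unfolding perm_dec_def F_def Let_def by auto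
  have root: "F u 3 = nat_of_bits (\<rho> u) \<and> [F u 4 = (\<Sum>i=1..n. F u 3 ^ i)] (mod p)"
    if "u \<in> V" "u = F u 0" for u
    using dec[OF that(1)] that(2) unfolding perm_dec_def F_def Let_def p_def by auto
  have parent: "E u (F u 2) \<and> F (F u 2) 1 < F u 1" if "u \<in> V" "u \<noteq> F u 0" for u
    using dec[OF that(1)] that(2) port[OF that(1)] unfolding perm_dec_def F_def Let_def by auto
  have local_sum: "[F u 4 = F u 3 ^ a u + (\<Sum>v\<leftarrow>port u. if F v 2 = u \<and> v \<noteq> F v 0 then F v 4 else 0)] (mod p)"
    if "u \<in> V" for u
    using dec[OF that] unfolding perm_dec_def F_def Let_def p_def by (simp add: comp_def)
  obtain u0 where "u0 \<in> V"
    using \<open>V \<noteq> {}\<close> by blast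
  define R where "R = F u0 0"
  define r where "r = F u0 3"
  have const: "F u 0 = R \<and> F u 3 = r" if "u \<in> V" for u
    using constant_on_connected[OF conn _ \<open>u0 \<in> V\<close> that, of "\<lambda>v. (F v 0, F v 3)"] agree
    by (simp add: R_def r_def)
  have "R \<in> V"
  proof (rule mem_if_others_not_minimal[OF \<open>V \<noteq> {}\<close>, of _ "\<lambda>v. F v 1"])
    show "\<exists>v\<in>V. F v 1 < F u 1" if "u \<in> V" "u \<noteq> R" for u
      using parent[OF that(1)] const[OF that(1)] that(2) edge by fastforce
  qed
  have parent_edge: "E v (F v 2)" if "v \<in> V" "v \<noteq> R" for v
    using parent[OF that(1)] const[OF that(1)] that(2) by simp
  have tree_sum: "[F u 4 = r ^ a u + (\<Sum>v\<in>{v\<in>V - {R}. F v 2 = u}. F v 4)] (mod p)" if "u \<in> V" for u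
  proof -
    have "(\<Sum>v\<leftarrow>port u. if F v 2 = u \<and> v \<noteq> F v 0 then F v 4 else 0)
        = (\<Sum>v\<leftarrow>port u. if F v 2 = u \<and> v \<noteq> R then F v 4 else 0)"
      using port[OF that] edge const by (intro arg_cong[where f = sum_list] map_cong) auto
    also have "\<dots> = (\<Sum>v\<in>{v\<in>V - {R}. F v 2 = u}. F v 4)"
      using vi that by (rule sum_list_port_children) (use parent_edge in blast)
    finally show ?thesis
      using local_sum[OF that] const[OF that] by simp
  qed
  have "[F R 4 = (\<Sum>u\<in>V. r ^ a u)] (mod p)"
  proof (rule tree_sum_cong[where S = "\<lambda>v. F v 4" and parent = "\<lambda>v. F v 2", OF \<open>finite V\<close> \<open>R \<in> V\<close>])
    show "F v 2 \<in> V" if "v \<in> V" "v \<noteq> R" for v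
      using parent_edge[OF that] edge by blast
  qed (rule tree_sum)
  moreover have "R = F R 0"
    using const[OF \<open>R \<in> V\<close>] by simp
  then have "r = nat_of_bits (\<rho> R)" and "[F R 4 = (\<Sum>i=1..n. r ^ i)] (mod p)"
    using root[OF \<open>R \<in> V\<close>] const[OF \<open>R \<in> V\<close>] by auto
  ultimately show ?thesis
    using \<open>R \<in> V\<close> unfolding p_def by (blast intro: cong_trans cong_sym)
qed

lemma perm_dec_sound:
  assumes vi: "valid_instance c n V E port" and adm: "perm_adm n V E a" and "\<not> Permutation n V E a"
  shows "accept_prob (perm_dec c) (coin_length n) n V port a P < 1 / 3"
proof -
  define k where "k = coin_length n"
  define p where "p = modulus n"
  have "finite V" and card_V: "card V = n" and "V \<noteq> {}"
    using vi unfolding valid_instance_def by auto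
  then have "n \<ge> 1"
    using card_gt_0_iff[of V] by linarith
  have square: "3 * n ^ 2 < 2 ^ k"
    unfolding k_def by (rule three_square_less_two_power_coin_length)
  have "prime p" and "2 ^ k < p"
    using modulus_bounds[of n] unfolding p_def k_def by auto
  moreover have "n \<le> 3 * n ^ 2"
    by (simp add: power2_eq_square)
  ultimately have "n < p"
    using square by linarith
  define Bad where "Bad = {x\<in>{0..<p}. [(\<Sum>u\<in>V. x ^ a u) = (\<Sum>i=1..n. x ^ i)] (mod p)}"
  have card_Bad: "card Bad \<le> n"
    unfolding Bad_def using \<open>prime p\<close> \<open>n < p\<close> \<open>finite V\<close> card_V adm \<open>\<not> Permutation n V E a\<close>
    by (intro card_power_sum_coincidences_le) (auto simp: perm_adm_def Permutation_def)
  have "finite Bad"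
    by (simp add: Bad_def)
  define A where "A = {\<rho>\<in>coin_space V k. all_accept (perm_dec c) n V port a \<rho> (P \<rho>)}"
  have "A \<subseteq> {\<rho>\<in>coin_space V k. \<exists>R\<in>V. nat_of_bits (\<rho> R) \<in> Bad}"
  proof
    fix \<rho> assume "\<rho> \<in> A"
    then have coins: "\<rho> \<in> coin_space V k" and "all_accept (perm_dec c) n V port a \<rho> (P \<rho>)"
      by (auto simp: A_def)
    then obtain R where "R \<in> V"
      and R: "[(\<Sum>u\<in>V. nat_of_bits (\<rho> R) ^ a u) = (\<Sum>i=1..n. nat_of_bits (\<rho> R) ^ i)] (mod p)"
      using all_accept_imp_power_sum_cong[OF vi] unfolding p_def by blast
    have "nat_of_bits (\<rho> R) < 2 ^ k"
      using coins \<open>R \<in> V\<close> nat_of_bits_less[of "\<rho> R"] by (auto simp: coin_space_def PiE_iff)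
    then have "nat_of_bits (\<rho> R) \<in> Bad"
      using R \<open>2 ^ k < p\<close> by (simp add: Bad_def)
    then show "\<rho> \<in> {\<rho>\<in>coin_space V k. \<exists>R\<in>V. nat_of_bits (\<rho> R) \<in> Bad}"
      using coins \<open>R \<in> V\<close> by blast
  qed
  then have "card A \<le> card {\<rho>\<in>coin_space V k. \<exists>R\<in>V. nat_of_bits (\<rho> R) \<in> Bad}"
    using finite_coin_space[OF \<open>finite V\<close>, of k] by (intro card_mono) auto
  also have "\<dots> \<le> n * (card Bad * (2 ^ k) ^ (n - 1))"
    using card_coin_space_some_value_in[OF \<open>finite V\<close> \<open>finite Bad\<close>, of k] card_V by simp
  also have "\<dots> \<le> n * (n * (2 ^ k) ^ (n - 1))"
    using card_Bad by simp
  finally have "3 * card A \<le> 3 * n ^ 2 * (2 ^ k) ^ (n - 1)"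
    using card_V by (simp add: power2_eq_square)
  also have "\<dots> < 2 ^ k * (2 ^ k) ^ (n - 1)"
    using square by simp
  also have "\<dots> = card (coin_space V k)"
    using card_coin_space[OF \<open>finite V\<close>] card_V \<open>n \<ge> 1\<close> by (simp add: power_eq_if)
  finally show ?thesis
    unfolding accept_prob_def A_def k_def by (simp add: divide_less_eq)
qed

lemma all_accept_of_certificate_fields:
  assumes vi: "valid_instance c n V E port"
    and power_sums: "\<And>x :: nat. (\<Sum>u\<in>V. x ^ a u) = (\<Sum>i=1..n. x ^ i)"
    and "R \<in> V" and parent: "\<And>u. u \<in> V \<Longrightarrow> parent u \<in> V"
    and tree: "\<And>u. u \<in> V \<Longrightarrow> u \<noteq> R \<Longrightarrow> E u (parent u) \<and> rank (parent u) < rank u"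
    and subtree_sums: "\<And>u. u \<in> V \<Longrightarrow>
          S u = (nat_of_bits (\<rho> R) ^ a u + (\<Sum>v\<in>{v\<in>V - {R}. parent v = u}. S v)) mod modulus n"
    and fields: "\<And>v i. v \<in> V \<Longrightarrow> i < 5 \<Longrightarrow>
          field (field_width c n) (\<pi> v) i = [R, rank v, parent v, nat_of_bits (\<rho> R), S v] ! i"
  shows "all_accept (perm_dec c) n V port a \<rho> \<pi>"
  unfolding all_accept_def
proof
  fix u assume "u \<in> V"
  define p where "p = modulus n"
  define r where "r = nat_of_bits (\<rho> R)"
  define F where "F t i = field (field_width c n) t i" for t i
  have F: "F (\<pi> v) 0 = R" "F (\<pi> v) 1 = rank v" "F (\<pi> v) 2 = parent v" "F (\<pi> v) 3 = r" "F (\<pi> v) 4 = S v"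
    if "v \<in> V" for v
    using fields[OF that, of 0] fields[OF that, of 1] fields[OF that, of 2] fields[OF that, of 3]
      fields[OF that, of 4]
    by (simp_all add: F_def r_def)
  have port: "set (port u) = {v. E u v}"
    and edge: "\<And>x y. E x y \<Longrightarrow> x \<in> V \<and> y \<in> V \<and> E y x"
    using vi \<open>u \<in> V\<close> unfolding valid_instance_def by auto
  have tree_sum: "[S u = r ^ a u + (\<Sum>v\<in>{v\<in>V - {R}. parent v = u}. S v)] (mod p)" if "u \<in> V" for u
    using subtree_sums[OF that] by (simp add: cong_def p_def r_def)
  have agree: "\<forall>(v, t)\<in>set (map (\<lambda>v. (v, \<pi> v)) (port u)). F t 0 = F (\<pi> u) 0 \<and> F t 3 = F (\<pi> u) 3"
    using port edge F \<open>u \<in> V\<close> by auto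
  have root_or_parent: "if u = F (\<pi> u) 0
      then F (\<pi> u) 3 = nat_of_bits (\<rho> u) \<and> [F (\<pi> u) 4 = (\<Sum>i=1..n. F (\<pi> u) 3 ^ i)] (mod p)
      else (\<exists>(v, t)\<in>set (map (\<lambda>v. (v, \<pi> v)) (port u)). v = F (\<pi> u) 2 \<and> F t 1 < F (\<pi> u) 1)"
  proof (cases "u = R")
    case True
    have "finite V"
      using vi by (simp add: valid_instance_def)
    then have "[S R = (\<Sum>u\<in>V. r ^ a u)] (mod p)"
      using \<open>R \<in> V\<close> parent tree_sum by (rule tree_sum_cong[where parent = parent])
    then have "[S R = (\<Sum>i=1..n. r ^ i)] (mod p)"
      by (simp only: power_sums)
    then show ?thesis
      using True F[OF \<open>u \<in> V\<close>] by (simp add: r_def)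
  next
    case False
    then show ?thesis
      using tree[OF \<open>u \<in> V\<close> False] F[OF \<open>u \<in> V\<close>] F[OF parent[OF \<open>u \<in> V\<close>]] port by force
  qed
  have "(\<Sum>(v, t)\<leftarrow>map (\<lambda>v. (v, \<pi> v)) (port u). if F t 2 = u \<and> v \<noteq> F t 0 then F t 4 else 0)
      = (\<Sum>v\<leftarrow>port u. if parent v = u \<and> v \<noteq> R then S v else 0)"
    using port edge F by (auto simp: comp_def intro!: arg_cong[where f = sum_list] map_cong)
  also have "\<dots> = (\<Sum>v\<in>{v\<in>V - {R}. parent v = u}. S v)"
    using vi \<open>u \<in> V\<close> by (rule sum_list_port_children) (use tree edge in blast)
  finally have "[F (\<pi> u) 4 = F (\<pi> u) 3 ^ a u
      + (\<Sum>(v, t)\<leftarrow>map (\<lambda>v. (v, \<pi> v)) (port u). if F t 2 = u \<and> v \<noteq> F t 0 then F t 4 else 0)] (mod p)"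
    using tree_sum[OF \<open>u \<in> V\<close>] F[OF \<open>u \<in> V\<close>] by simp
  with agree root_or_parent show "perm_dec c n u (a u) (\<rho> u) (\<pi> u) (map (\<lambda>v. (v, \<pi> v)) (port u))"
    unfolding perm_dec_def Let_def F_def p_def by blast
qed

lemma sum_inj_on_interval:
  fixes a :: "'v \<Rightarrow> nat"
  assumes "finite V" and "card V = n" and "inj_on a V" and "a ` V \<subseteq> {1..n}"
  shows "(\<Sum>u\<in>V. f (a u)) = (\<Sum>i=1..n. f i)"
proof -
  have "a ` V = {1..n}"
    using assms by (intro card_subset_eq) (auto simp: card_image)
  then show ?thesis
    using sum.reindex[OF \<open>inj_on a V\<close>, of f] by simp
qed

lemma exists_accepted_prover:
  assumes vi: "valid_instance c n V E port"
    and power_sums: "\<And>x :: nat. (\<Sum>u\<in>V. x ^ a u) = (\<Sum>i=1..n. x ^ i)"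
    and "R \<in> V" and tree: "\<forall>u\<in>V. parent u \<in> V \<and> rank u < card V \<and>
      (u \<noteq> R \<longrightarrow> E u (parent u) \<and> rank (parent u) < rank u)"
  shows "\<exists>P. prover_bounded V (coin_length n) (proof_length c n) P \<and>
           (\<forall>\<rho>\<in>coin_space V (coin_length n). all_accept (perm_dec c) n V port a \<rho> (P \<rho>))"
proof -
  define k where "k = coin_length n"
  define w where "w = field_width c n"
  define p where "p = modulus n"
  have "finite V" and card_V: "card V = n" and ids: "V \<subseteq> {..<n ^ c}"
    using vi unfolding valid_instance_def by auto
  define S where "S \<rho> = (SOME S. \<forall>u\<in>V.
      S u = (nat_of_bits (\<rho> R) ^ a u + (\<Sum>v\<in>{v\<in>V - {R}. parent v = u}. S v)) mod p)"
    for \<rho> :: "nat \<Rightarrow> bool list"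
  have subtree_sums:
    "\<forall>u\<in>V. S \<rho> u = (nat_of_bits (\<rho> R) ^ a u + (\<Sum>v\<in>{v\<in>V - {R}. parent v = u}. S \<rho> v)) mod p" for \<rho>
    unfolding S_def using tree
    by (intro someI_ex[OF exists_tree_recursion[OF \<open>finite V\<close>, of R rank parent]]) blast
  define P where "P \<rho> v = encode_fields w [R, rank v, parent v, nat_of_bits (\<rho> R), S \<rho> v]" for \<rho> v
  have fields_small: "\<forall>x\<in>set [R, rank v, parent v, nat_of_bits (\<rho> R), S \<rho> v]. x < 2 ^ w"
    if "\<rho> \<in> coin_space V k" "v \<in> V" for \<rho> v
  proof -
    have "length (\<rho> R) = k"
      using that(1) \<open>R \<in> V\<close> by (auto simp: coin_space_def PiE_iff)
    then have "nat_of_bits (\<rho> R) < 2 ^ k"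
      using nat_of_bits_less[of "\<rho> R"] by simp
    then have "nat_of_bits (\<rho> R) < 2 ^ w"
      using field_width_bounds(3)[of n c] unfolding k_def w_def by (rule order_less_le_trans)
    moreover have "S \<rho> v < 2 ^ w"
      using subtree_sums that(2) modulus_bounds[of n] field_width_bounds(4)[of n c]
      by (metis mod_less_divisor order_less_le_trans prime_gt_0_nat p_def w_def)
    ultimately show ?thesis
      using ids field_width_bounds(1,2)[of n c] \<open>R \<in> V\<close> that(2) tree card_V
      by (fastforce simp: w_def)
  qed
  have "all_accept (perm_dec c) n V port a \<rho> (P \<rho>)" if "\<rho> \<in> coin_space V k" for \<rho>
  proof (rule all_accept_of_certificate_fields[OF vi power_sums \<open>R \<in> V\<close>])
    show "parent u \<in> V" and "u \<noteq> R \<Longrightarrow> E u (parent u) \<and> rank (parent u) < rank u" if "u \<in> V" for u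
      using tree that by auto
    show "S \<rho> u = (nat_of_bits (\<rho> R) ^ a u + (\<Sum>v\<in>{v\<in>V - {R}. parent v = u}. S \<rho> v)) mod modulus n"
      if "u \<in> V" for u
      using subtree_sums that unfolding p_def by blast
    show "field (field_width c n) (P \<rho> v) i = [R, rank v, parent v, nat_of_bits (\<rho> R), S \<rho> v] ! i"
      if "v \<in> V" "i < 5" for v i
      using field_encode_fields fields_small[OF \<open>\<rho> \<in> coin_space V k\<close> \<open>v \<in> V\<close>] that(2)
      unfolding P_def w_def by simp
  qed
  moreover have "prover_bounded V k (proof_length c n) P"
    by (simp add: prover_bounded_def P_def proof_length_def w_def)
  ultimately show ?thesis
    unfolding k_def by blast
qed

lemma perm_dec_complete:
  assumes vi: "valid_instance c n V E port" and adm: "perm_adm n V E a" and perm: "Permutation n V E a"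
  shows "\<exists>P. prover_bounded V (coin_length n) (proof_length c n) P
           \<and> accept_prob (perm_dec c) (coin_length n) n V port a P > 2 / 3"
proof -
  have "finite V" and card_V: "card V = n" and "V \<noteq> {}"
    and conn: "\<forall>u\<in>V. \<forall>v\<in>V. (u, v) \<in> {(x, y). E x y}\<^sup>*" and closed: "\<And>u v. E u v \<Longrightarrow> v \<in> V"
    using vi unfolding valid_instance_def by auto
  obtain R where "R \<in> V"
    using \<open>V \<noteq> {}\<close> by blast
  have "\<exists>parent rank. \<forall>u\<in>V. parent u \<in> V \<and> rank u < card V \<and>
      (u \<noteq> R \<longrightarrow> E u (parent u) \<and> rank (parent u) < rank u)"
  proof (rule exists_rooted_spanning_tree[OF \<open>finite V\<close> \<open>R \<in> V\<close>])
    show "\<forall>u\<in>V. (u, R) \<in> {(x, y). E x y}\<^sup>*"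
      using conn \<open>R \<in> V\<close> by blast
  qed (rule closed)
  then obtain parent rank where tree: "\<forall>u\<in>V. parent u \<in> V \<and> rank u < card V \<and>
      (u \<noteq> R \<longrightarrow> E u (parent u) \<and> rank (parent u) < rank u)"
    by blast
  have "inj_on a V" and "a ` V \<subseteq> {1..n}"
    using perm adm by (auto simp: Permutation_def perm_adm_def)
  then have "(\<Sum>u\<in>V. x ^ a u) = (\<Sum>i=1..n. x ^ i)" for x :: nat
    by (rule sum_inj_on_interval[OF \<open>finite V\<close> card_V])
  then obtain P where P: "prover_bounded V (coin_length n) (proof_length c n) P"
    and accepted: "\<forall>\<rho>\<in>coin_space V (coin_length n). all_accept (perm_dec c) n V port a \<rho> (P \<rho>)"
    using exists_accepted_prover[OF vi _ \<open>R \<in> V\<close> tree] by blast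
  have "card (coin_space V (coin_length n)) > 0"
    using card_coin_space[OF \<open>finite V\<close>] by simp
  then have "accept_prob (perm_dec c) (coin_length n) n V port a P = 1"
    using accepted by (simp add: accept_prob_def Collect_conj_eq Int_absorb2 subset_iff)
  then show ?thesis
    using P by auto
qed

theorem theorem1p3:
  "\<forall>c :: nat. \<exists>l :: nat \<Rightarrow> nat.
     (\<lambda>n. real (l n)) \<in> O(\<lambda>n. ln (real n)) \<and> in_dAM c l perm_adm Permutation"
proof
  fix c :: nat
  have "in_dAM c (proof_length c) perm_adm Permutation"
    unfolding in_dAM_def
  proof (intro exI[of _ coin_length] exI[of _ "perm_dec c"] conjI allI impI)
    show "coin_length n \<le> proof_length c n" for n
      by (simp add: proof_length_def field_width_def)
  qed (use perm_dec_complete perm_dec_sound in blast)+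
  then show "\<exists>l. (\<lambda>n. real (l n)) \<in> O(\<lambda>n. ln (real n)) \<and> in_dAM c l perm_adm Permutation"
    using proof_length_bigo by blast
qed

end
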